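(* For all positive integers $r$ and $m$, there exist infinitely many primes $p$ such that $pm$ is a Schemmel nontotient number of order $r$, i.e. $pm\notin S_r(\mathbb{N})$.
   Context: For a positive integer $r$, the $r$-th Schemmel totient function $S_r:\mathbb{N}\to\mathbb{N}_0$ is the multiplicative arithmetic function (so $S_r(1)=1$ and $S_r(ab)=S_r(a)S_r(b)$ for coprime $a,b$) defined on prime powers by $S_r(p^{\alpha})=0$ if $p\le r$ and $S_r(p^\alpha)=p^{\alpha-1}(p-r)$ if $p>r$, for all primes $p$ and positive integers $\alpha$. A Schemmel nontotient number of order $r$ is a positive integer not in the range of $S_r$; $G_r$ denotes the set of these. *)

theory Defs
  imports "HOL-Computational_Algebra.Primes"
begin

text \<open>The value at 0 is irrelevant (0 is not in the domain).\<close>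
definition schemmel :: "nat \<Rightarrow> nat \<Rightarrow> nat" where
  "schemmel r n = (\<Prod>p\<in>prime_factors n.
      (if p \<le> r then 0 else p ^ (multiplicity p n - 1) * (p - r)))"

definition schemmel_nontotient :: "nat \<Rightarrow> nat \<Rightarrow> bool" where
  "schemmel_nontotient r k \<longleftrightarrow> k > 0 \<and> (\<nexists>n. n > 0 \<and> schemmel r n = k)"

end

theory Submission
  imports Defs "HOL-Number_Theory.Number_Theory"
begin

text \<open>Take a prime \<open>p > m + r\<close> with \<open>p \<equiv> 1\<close> modulo every prime factor of \<open>\<Prod>d \<mid> m. d + r\<close>.
  If \<open>S_r(n) = p m\<close>, then \<open>p\<close> divides a factor \<open>q ^ (k - 1) * (q - r)\<close> of \<open>S_r(n)\<close>, with \<open>q\<close> prime.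
  If \<open>p = q\<close>, then \<open>p - r\<close> divides \<open>m\<close>, which is too small. Otherwise \<open>q - r = p d\<close> with \<open>d \<mid> m\<close>,
  and \<open>q = (p - 1) d + (d + r)\<close> is divisible by a prime factor of \<open>d + r < q\<close>.
  Such primes \<open>p\<close> exist by an elementary case of Dirichlet's theorem.\<close>

lemma nat_power_diff_1_eq:
  fixes z :: nat
  assumes "z \<ge> 1"
  shows "z ^ t - 1 = (z - 1) * (\<Sum>i<t. z ^ i)"
proof -
  have "int (z ^ t - 1) = int z ^ t - 1" using assms by (simp add: of_nat_diff)
  also have "\<dots> = (int z - 1) * (\<Sum>i<t. int z ^ i)" by (rule power_diff_1_eq)
  also have "\<dots> = int ((z - 1) * (\<Sum>i<t. z ^ i))" using assms by (simp add: of_nat_diff)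
  finally show ?thesis by linarith
qed

text \<open>The easy case of lifting the exponent: the cofactor \<open>1 + z + \<dots> + z ^ (t - 1)\<close>
  is \<open>t\<close> modulo \<open>p\<close>.\<close>

lemma multiplicity_power_diff_1_eq:
  fixes z t p :: nat
  assumes "prime p" "z > 1" "p dvd z - 1" "\<not> p dvd t"
  shows "multiplicity p (z ^ t - 1) = multiplicity p (z - 1)"
proof -
  define Q where "Q = (\<Sum>i<t. z ^ i)"
  have "[Q = (\<Sum>i<t. 1 ^ i)] (mod p)"
    unfolding Q_def using assms(2,3) by (intro cong_sum cong_pow) (simp add: cong_altdef_nat)
  then have "\<not> p dvd Q" using assms(4) cong_dvd_iff by auto
  then have "Q \<noteq> 0" and "multiplicity p Q = 0"
    by (auto intro: not_dvd_imp_multiplicity_0 intro!: Nat.gr0I)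
  moreover have "z ^ t - 1 = (z - 1) * Q" unfolding Q_def using assms(2) by (intro nat_power_diff_1_eq) simp
  ultimately show ?thesis
    using assms(1,2) by (simp add: prime_elem_multiplicity_mult_distrib)
qed

lemma not_dvd_if_dvd_power_diff_1:
  fixes p y k :: nat
  assumes "p dvd y ^ k - 1" "y > 0" "k > 0" "p \<noteq> 1"
  shows "\<not> p dvd y"
proof
  assume "p dvd y"
  then have "p dvd y ^ k" using assms(3) by (simp add: dvd_power_same dvd_trans[OF _ dvd_power])
  then have "p dvd y ^ k - (y ^ k - 1)" using assms(1) by (rule dvd_diff_nat)
  then show False using assms(2,4) by simp
qed

text \<open>If every prime of \<open>y ^ E - 1\<close> divided some \<open>y ^ e l - 1\<close>, lifting the exponent would make
  \<open>y ^ E - 1\<close> divide their product, which is at most \<open>y ^ (E - 1)\<close>.\<close>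

lemma ex_prime_dvd_power_diff_1_not_dvd:
  fixes y E :: nat and e :: "'a \<Rightarrow> nat"
  assumes y: "y \<ge> 2" and E: "E \<ge> 2" and S: "finite S"
    and e_dvd: "\<And>l. l \<in> S \<Longrightarrow> e l dvd E"
    and cofactor_primes: "\<And>l q. l \<in> S \<Longrightarrow> prime q \<Longrightarrow> q dvd E div e l \<Longrightarrow> q dvd y"
    and sum_less: "(\<Sum>l\<in>S. e l) < E"
  shows "\<exists>p. prime p \<and> p dvd y ^ E - 1 \<and> (\<forall>l\<in>S. \<not> p dvd y ^ e l - 1)"
proof (rule ccontr)
  assume no_new_prime: "\<not> ?thesis"
  define A where "A = y ^ E - 1"
  define B where "B l = y ^ e l - 1" for l
  have big_power: "y ^ k \<ge> 2" if "k > 0" for k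
    using y that power_increasing[of 1 k y] by simp
  have B_nz: "B l \<noteq> 0" if "l \<in> S" for l
  proof -
    have "e l > 0" using e_dvd[OF that] E by (intro Nat.gr0I) simp
    then show ?thesis unfolding B_def using big_power[of "e l"] by simp
  qed
  then have prod_nz: "(\<Prod>l\<in>S. B l) \<noteq> 0" using S by simp
  have A_nz: "A \<noteq> 0" unfolding A_def using big_power[of E] E by simp
  have "A dvd (\<Prod>l\<in>S. B l)"
  proof (rule multiplicity_le_imp_dvd[OF A_nz])
    fix p :: nat assume p: "prime p"
    show "multiplicity p A \<le> multiplicity p (\<Prod>l\<in>S. B l)"
    proof (cases "p dvd A")
      case False then show ?thesis by (simp add: not_dvd_imp_multiplicity_0)
    next
      case True
      then obtain l where l: "l \<in> S" "p dvd B l"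
        using no_new_prime p unfolding A_def B_def by blast
      have "\<not> p dvd y"
        using True p y E unfolding A_def by (intro not_dvd_if_dvd_power_diff_1) auto
      then have "\<not> p dvd E div e l" using cofactor_primes[OF l(1) p] by blast
      moreover have "A = (y ^ e l) ^ (E div e l) - 1"
        unfolding A_def using e_dvd[OF l(1)] by (simp flip: power_mult)
      moreover have "y ^ e l > 1" using B_nz[OF l(1)] unfolding B_def by simp
      ultimately have "multiplicity p A = multiplicity p (B l)"
        using multiplicity_power_diff_1_eq[OF p, of "y ^ e l" "E div e l"] l(2)
        unfolding B_def by simp
      also have "\<dots> \<le> multiplicity p (\<Prod>l\<in>S. B l)"
        by (rule dvd_imp_multiplicity_le[OF dvd_prodI[OF S l(1)] prod_nz])
      finally show ?thesis .
    qed
  qed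
  then have "A \<le> (\<Prod>l\<in>S. B l)" using prod_nz by (simp add: dvd_imp_le)
  also have "\<dots> \<le> (\<Prod>l\<in>S. y ^ e l)" unfolding B_def by (intro prod_mono) auto
  also have "\<dots> = y ^ (\<Sum>l\<in>S. e l)" by (simp add: power_sum)
  also have "\<dots> \<le> y ^ (E - 1)" using sum_less y by (intro power_increasing) auto
  also have "\<dots> < A"
  proof -
    have "y ^ E = y * y ^ (E - 1)" using E by (simp flip: power_Suc)
    moreover have "2 * y ^ (E - 1) \<le> y * y ^ (E - 1)" using y by simp
    ultimately show ?thesis unfolding A_def using big_power[of "E - 1"] E by linarith
  qed
  finally show False by simp
qed

lemma prime_dvd_pred_if_power_cong_1:
  fixes p l y e a :: nat
  assumes "prime p" "prime l" "[y ^ (l ^ a * e) = 1] (mod p)" "\<not> [y ^ e = 1] (mod p)"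
  shows "l dvd p - 1"
proof -
  have ord_dvd: "ord p y dvd l ^ a * e" and ord_ndvd: "\<not> ord p y dvd e"
    using assms(3,4) ord_divides by blast+
  have "coprime p y"
  proof (rule ccontr)
    assume "\<not> coprime p y"
    then have "ord p y = 0" by (simp add: ord_eq_0)
    then show False using ord_dvd ord_ndvd assms(2) by (auto simp: prime_gt_0_nat)
  qed
  then have "ord p y dvd totient p" by (rule order_divides_totient)
  moreover have "\<not> coprime (ord p y) (l ^ a)"
    using ord_dvd ord_ndvd coprime_dvd_mult_right_iff by blast
  then have "l dvd ord p y" using assms(2) by (metis coprime_commute coprime_power_right_iff prime_imp_coprime)
  ultimately show ?thesis using assms(1) by (simp add: totient_prime dvd_trans)
qed

text \<open>With \<open>E = \<Prod>l\<in>S. l ^ a\<close> and \<open>y = N! * E\<close>, a prime of \<open>y ^ E - 1\<close> dividing no \<open>y ^ (E div l ^ a) - 1\<close>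
  exceeds \<open>N\<close> and sees \<open>y\<close> with an order divisible by every \<open>l\<close>; the exponent \<open>a > card S\<close>
  makes the exponents \<open>E div l ^ a\<close> sum to less than \<open>E\<close>.\<close>

lemma ex_prime_cong_1_mod_primes:
  fixes S :: "nat set" and N :: nat
  assumes S: "finite S" "\<And>l. l \<in> S \<Longrightarrow> prime l"
  shows "\<exists>p. prime p \<and> N < p \<and> (\<forall>l\<in>S. l dvd p - 1)"
proof (cases "S = {}")
  case True
  then show ?thesis using bigger_prime by auto
next
  case False
  define a where "a = Suc (card S)"
  define E where "E = (\<Prod>l\<in>S. l ^ a)"
  define e where "e l = (\<Prod>l'\<in>S - {l}. l' ^ a)" for l
  define y where "y = fact N * E"
  have E_split: "E = l ^ a * e l" if "l \<in> S" for l
    unfolding E_def e_def using S(1) that by (simp add: prod.remove)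
  have l_ge_2: "l \<ge> 2" if "l \<in> S" for l using S(2)[OF that] prime_ge_2_nat by blast
  have e_pos: "e l > 0" for l
    unfolding e_def using l_ge_2 by (intro prod_pos) (force simp: Suc_le_lessD)
  have cofactor: "E div e l = l ^ a" if "l \<in> S" for l
    using E_split[OF that] e_pos[of l] by simp
  have l_pow: "2 ^ a \<le> l ^ a" if "l \<in> S" for l using l_ge_2[OF that] by (simp add: power_mono)
  obtain l0 where l0: "l0 \<in> S" using False by blast
  have "(2::nat) \<le> 2 ^ a" unfolding a_def by simp
  also have "\<dots> \<le> E" using l_pow[OF l0] E_split[OF l0] e_pos[of l0] by (simp add: le_trans)
  finally have E: "E \<ge> 2" .
  have "E \<le> y" unfolding y_def using mult_le_mono1[OF fact_ge_1[of N], of E] by simp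
  with E have y: "y \<ge> 2" by simp
  have l_dvd_y: "l dvd y" if "l \<in> S" for l
    using E_split[OF that] unfolding y_def a_def by simp
  have "2 ^ a * (\<Sum>l\<in>S. e l) = (\<Sum>l\<in>S. 2 ^ a * e l)" by (simp add: sum_distrib_left)
  also have "\<dots> \<le> (\<Sum>l\<in>S. E)" using l_pow E_split by (intro sum_mono) simp
  also have "\<dots> = card S * E" by simp
  also have "\<dots> < 2 ^ a * E"
  proof (rule mult_strict_right_mono)
    show "card S < 2 ^ a" unfolding a_def using less_exp[of "Suc (card S)"] by linarith
  qed (use E in simp)
  finally have sum_less: "(\<Sum>l\<in>S. e l) < E" by simp
  have "\<exists>p. prime p \<and> p dvd y ^ E - 1 \<and> (\<forall>l\<in>S. \<not> p dvd y ^ e l - 1)"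
  proof (rule ex_prime_dvd_power_diff_1_not_dvd[OF y E S(1) _ _ sum_less])
    show "e l dvd E" if "l \<in> S" for l using E_split[OF that] by simp
    show "q dvd y" if "l \<in> S" "prime q" "q dvd E div e l" for l q
    proof -
      have "q dvd l" using that prime_dvd_power by (auto simp: cofactor)
      then have "q = l" using that(2) S(2)[OF that(1)] by (simp add: primes_dvd_imp_eq)
      then show ?thesis using l_dvd_y[OF that(1)] by simp
    qed
  qed
  then obtain p where p: "prime p" "p dvd y ^ E - 1" and new: "\<forall>l\<in>S. \<not> p dvd y ^ e l - 1"
    by blast
  have "\<not> p dvd y" using p y E by (intro not_dvd_if_dvd_power_diff_1) auto
  then have "\<not> p dvd fact N" unfolding y_def by auto
  then have "N < p" using p(1) dvd_fact[of p N] prime_gt_0_nat[of p] by linarith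
  moreover have "l dvd p - 1" if l: "l \<in> S" for l
  proof (rule prime_dvd_pred_if_power_cong_1[OF p(1) S(2)[OF l]])
    have "y ^ k \<ge> 1" for k using y by simp
    then show "[y ^ (l ^ a * e l) = 1] (mod p)" and "\<not> [y ^ e l = 1] (mod p)"
      using p(2) new l E_split[OF l] by (simp_all add: cong_altdef_nat)
  qed
  ultimately show ?thesis using p(1) by blast
qed

lemma schemmel_prime_dvd_factor:
  fixes r n p :: nat
  assumes "prime p" "p dvd schemmel r n" "schemmel r n \<noteq> 0"
  obtains q where "q \<in> prime_factors n" "r < q"
    "p dvd q ^ (multiplicity q n - 1) * (q - r)"
    "q ^ (multiplicity q n - 1) * (q - r) dvd schemmel r n"
proof -
  define f where "f q = (if q \<le> r then 0 else q ^ (multiplicity q n - 1) * (q - r))" for q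
  have schemmel_eq: "schemmel r n = (\<Prod>q\<in>prime_factors n. f q)" unfolding schemmel_def f_def ..
  obtain q where q: "q \<in> prime_factors n" "p dvd f q"
    using assms(1,2) unfolding schemmel_eq by (auto simp: prime_dvd_prod_iff)
  have f_dvd: "f q dvd schemmel r n" unfolding schemmel_eq using q(1) by (intro dvd_prodI) auto
  then have "r < q" using assms(3) unfolding f_def by (auto split: if_splits)
  with q f_dvd show ?thesis using that unfolding f_def by simp
qed

lemma schemmel_nontotient_prime_mult:
  fixes r m p :: nat
  assumes "m > 0" "prime p" "m + r < p"
    and small_primes: "\<And>d. d dvd m \<Longrightarrow> \<exists>l. prime l \<and> l dvd d + r \<and> l dvd p - 1"
  shows "schemmel_nontotient r (p * m)"
  unfolding schemmel_nontotient_def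
proof (intro conjI notI)
  have p2: "p \<ge> 2" using assms(2) prime_ge_2_nat by blast
  then show pm_pos: "p * m > 0" using assms(1) by simp
  assume "\<exists>n. n > 0 \<and> schemmel r n = p * m"
  then obtain n where n: "schemmel r n = p * m" by blast
  obtain q where q: "q \<in> prime_factors n" "r < q"
    and p_dvd: "p dvd q ^ (multiplicity q n - 1) * (q - r)"
    and factor_dvd: "q ^ (multiplicity q n - 1) * (q - r) dvd p * m"
    using schemmel_prime_dvd_factor[OF assms(2), of r n] n pm_pos by auto
  define k where "k = multiplicity q n - 1"
  have "prime q" using q(1) by auto
  from p_dvd consider "p dvd q ^ k" | "p dvd q - r"
    unfolding k_def using assms(2) by (auto simp: prime_dvd_mult_iff)
  then show False
  proof cases
    case 1
    then have "p = q" using assms(2) \<open>prime q\<close> prime_dvd_power primes_dvd_imp_eq by blast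
    have "k \<noteq> 0" using 1 p2 by (auto simp: k_def)
    then have "p dvd q ^ k" using \<open>p = q\<close> by simp
    then have "p * (p - r) dvd q ^ k * (q - r)" using \<open>p = q\<close> by (simp add: mult_dvd_mono)
    then have "p * (p - r) dvd p * m" using factor_dvd unfolding k_def by (rule dvd_trans)
    then have "p - r dvd m" using p2 by simp
    then have "p - r \<le> m" using assms(1) by (rule dvd_imp_le)
    then show False using assms(3) by linarith
  next
    case 2
    then obtain d where d: "q - r = p * d" by (auto elim: dvdE)
    have "p * (q ^ k * d) dvd p * m" using factor_dvd unfolding d k_def[symmetric] by (simp add: ac_simps)
    then have "d dvd m" using p2 by (simp add: dvd_mult_right)
    then obtain l where l: "prime l" "l dvd d + r" "l dvd p - 1" using small_primes by blast
    have "d > 0" using d q(2) by (intro Nat.gr0I) simp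
    have "(p - 1) * d + d = p * d" using p2 by (cases p) auto
    then have "q = (p - 1) * d + (d + r)" using d q(2) by linarith
    then have "l dvd q" using l(2,3) by simp
    then have "l = q" using l(1) \<open>prime q\<close> primes_dvd_imp_eq by blast
    moreover have "l \<le> d + r" using l(2) \<open>d > 0\<close> by (intro dvd_imp_le) auto
    moreover have "p * d \<ge> 2 * d" using p2 by simp
    ultimately show False using d q(2) \<open>d > 0\<close> by linarith
  qed
qed

theorem theorem1p1:
  fixes r m :: nat
  assumes "r > 0" and "m > 0"
  shows "infinite {p. prime p \<and> schemmel_nontotient r (p * m)}"
  unfolding infinite_nat_iff_unbounded
proof
  fix N
  define S where "S = prime_factors (\<Prod>d\<in>{d. d dvd m}. d + r)"
  have "finite S" "\<And>l. l \<in> S \<Longrightarrow> prime l" unfolding S_def by auto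
  then obtain p where p: "prime p" "N + m + r < p" "\<forall>l\<in>S. l dvd p - 1"
    using ex_prime_cong_1_mod_primes by meson
  have "schemmel_nontotient r (p * m)"
  proof (rule schemmel_nontotient_prime_mult[OF assms(2) p(1)])
    show "m + r < p" using p(2) by simp
    fix d assume d: "d dvd m"
    then have "d + r \<noteq> 1" using assms by (cases d) auto
    then obtain l where l: "prime l" "l dvd d + r" using prime_factor_nat by blast
    moreover have "d + r dvd (\<Prod>d\<in>{d. d dvd m}. d + r)"
      using d assms(2) by (intro dvd_prodI) auto
    ultimately have "l \<in> S" unfolding S_def using assms(2)
      by (auto simp: in_prime_factors_iff intro: dvd_trans)
    with l p(3) show "\<exists>l. prime l \<and> l dvd d + r \<and> l dvd p - 1" by blast
  qed
  then show "\<exists>p>N. p \<in> {p. prime p \<and> schemmel_nontotient r (p * m)}"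
    using p(1,2) by (intro exI[of _ p]) auto
qed

end
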